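(* Let $A$ be a CQG algebra, $Z$ a $*$-algebra with a transitive right $*$-coaction of $A$, identified (via the intertwiner) with a $*$-subalgebra and right coideal of $A$ with coaction $\Delta|_Z$. Let $C$ be a Hopf $*$-algebra with a surjective unital Hopf $*$-algebra homomorphism $\theta:A\to C$ such that $\theta(z)=\varepsilon(z)1_C$ for all $z\in Z$, and put $\delta_C=(\mathrm{id}\otimes\theta)\Delta:Z\to Z\otimes C$. Then every subcomodule $V\subset Z$ (i.e. $\Delta(V)\subset V\otimes A$) of finite dimension $N\ge1$ contains a nonzero $C$-invariant element, i.e. some $\zeta_0\in V$, $\zeta_0\ne0$, with $\delta_C(\zeta_0)=\zeta_0\otimes1_C$.
   Context: A Hopf $*$-algebra is a Hopf algebra $(A,\Delta,\varepsilon,S)$ with an antilinear involution making it a $*$-algebra such that $\Delta,\varepsilon$ are $*$-homomorphisms. A right corepresentation of $A$ on $V$ is a linear $\pi:V\to V\otimes A$ with $(\pi\otimes\mathrm{id})\pi=(\mathrm{id}\otimes\Delta)\pi$ and $(\mathrm{id}\otimes\varepsilon)\pi=\mathrm{id}$; it is unitary w.r.t. an inner product if $\langle\pi(v),\pi(w)\rangle=\langle v,w\rangle1_A$, where $\langle v\otimes a,w\otimes b\rangle=\langle v,w\rangle b^*a$. A CQG algebra is a Hopf $*$-algebra spanned by the matrix coefficients of its finite-dimensional unitary corepresentations; it has a unique normalized Haar functional $h$ ($h(1)=1$, $(h\otimes\mathrm{id})\Delta(a)=h(a)1=(\mathrm{id}\otimes h)\Delta(a)$, $h(a^*a)>0$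 for $a\ne0$). A right $*$-coaction of $A$ on a $*$-algebra $Z$ is a right corepresentation $\delta:Z\to Z\otimes A$ that is a $*$-algebra homomorphism; it is transitive if there is an injective $*$-algebra homomorphism $\psi:Z\to A$ with $\Delta\circ\psi=(\psi\otimes\mathrm{id})\circ\delta$. *)

theory Defs
  imports Complex_Main
begin

text \<open>A complex algebra is a type 'a of class ring_1 (addition, multiplication,
  unit) together with a complex scalar multiplication sc making it a complex vector space,
  compatible with multiplication. An element of the algebraic tensor product V (x) W is
  represented by a finite list of pairs [(v1,w1),...,(vk,wk)] standing for the sum of
  v_i (x) w_i. Two such representatives denote the same tensor iff they cannot be
  separated by products of linear functionals (this characterises equality in the
  algebraic tensor product of complex vector spaces).\<close>

definition tensor_eq ::
  "(complex \<Rightarrow> 'a \<Rightarrow> 'a) \<Rightarrow> (complex \<Rightarrow> 'b \<Rightarrow> 'b) \<Rightarrow>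
   ('a::ab_group_add \<times> 'b::ab_group_add) list \<Rightarrow> ('a \<times> 'b) list \<Rightarrow> bool" where
  "tensor_eq s1 s2 xs ys \<longleftrightarrow>
     (\<forall>f g. Vector_Spaces.linear s1 (*) f \<longrightarrow> Vector_Spaces.linear s2 (*) g \<longrightarrow>
        sum_list (map (\<lambda>(x,y). f x * g y) xs) = sum_list (map (\<lambda>(x,y). f x * g y) ys))"

definition tensor3_eq ::
  "(complex \<Rightarrow> 'a \<Rightarrow> 'a) \<Rightarrow> (complex \<Rightarrow> 'b \<Rightarrow> 'b) \<Rightarrow> (complex \<Rightarrow> 'c \<Rightarrow> 'c) \<Rightarrow>
   ('a::ab_group_add \<times> 'b::ab_group_add \<times> 'c::ab_group_add) list \<Rightarrow> ('a \<times> 'b \<times> 'c) list \<Rightarrow> bool" where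
  "tensor3_eq s1 s2 s3 xs ys \<longleftrightarrow>
     (\<forall>f g h. Vector_Spaces.linear s1 (*) f \<longrightarrow> Vector_Spaces.linear s2 (*) g \<longrightarrow>
        Vector_Spaces.linear s3 (*) h \<longrightarrow>
        sum_list (map (\<lambda>(x,y,z). f x * g y * h z) xs) =
        sum_list (map (\<lambda>(x,y,z). f x * g y * h z) ys))"

text \<open>Data of a Hopf *-algebra on a type 'a: scalar multiplication, involution,
  comultiplication (with values representatives of tensors in A (x) A), counit, antipode.\<close>
record 'a hopf_data =
  sc  :: "complex \<Rightarrow> 'a \<Rightarrow> 'a"
  st  :: "'a \<Rightarrow> 'a"
  cop :: "'a \<Rightarrow> ('a \<times> 'a) list"
  cou :: "'a \<Rightarrow> complex"
  ant :: "'a \<Rightarrow> 'a"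

abbreviation teqH :: "('a::ring_1) hopf_data \<Rightarrow> ('a \<times> 'a) list \<Rightarrow> ('a \<times> 'a) list \<Rightarrow> bool" where
  "teqH H \<equiv> tensor_eq (sc H) (sc H)"

definition hopf_star_algebra :: "('a::ring_1) hopf_data \<Rightarrow> bool" where
  "hopf_star_algebra H \<longleftrightarrow>
     \<comment> \<open>complex algebra\<close>
     vector_space (sc H) \<and>
     (\<forall>c x y. sc H c (x * y) = sc H c x * y \<and> sc H c (x * y) = x * sc H c y) \<and>
     \<comment> \<open>antilinear involution, antimultiplicative: *-algebra\<close>
     (\<forall>x. st H (st H x) = x) \<and>
     (\<forall>x y. st H (x + y) = st H x + st H y) \<and>
     (\<forall>c x. st H (sc H c x) = sc H (cnj c) (st H x)) \<and>
     (\<forall>x y. st H (x * y) = st H y * st H x) \<and>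
     \<comment> \<open>comultiplication: linear, coassociative, unital *-homomorphism\<close>
     (\<forall>x y. teqH H (cop H (x + y)) (cop H x @ cop H y)) \<and>
     (\<forall>c x. teqH H (cop H (sc H c x)) (map (\<lambda>(a,b). (sc H c a, b)) (cop H x))) \<and>
     (\<forall>x. tensor3_eq (sc H) (sc H) (sc H)
            (concat (map (\<lambda>(a,b). map (\<lambda>(a1,a2). (a1, a2, b)) (cop H a)) (cop H x)))
            (concat (map (\<lambda>(a,b). map (\<lambda>(b1,b2). (a, b1, b2)) (cop H b)) (cop H x)))) \<and>
     (\<forall>x y. teqH H (cop H (x * y))
              (concat (map (\<lambda>(a,b). map (\<lambda>(a',b'). (a * a', b * b')) (cop H y)) (cop H x)))) \<and>
     teqH H (cop H 1) [(1, 1)] \<and>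
     (\<forall>x. teqH H (cop H (st H x)) (map (\<lambda>(a,b). (st H a, st H b)) (cop H x))) \<and>
     \<comment> \<open>counit: linear, unital *-homomorphism, counit property\<close>
     (\<forall>x y. cou H (x + y) = cou H x + cou H y) \<and>
     (\<forall>c x. cou H (sc H c x) = c * cou H x) \<and>
     (\<forall>x y. cou H (x * y) = cou H x * cou H y) \<and>
     cou H 1 = 1 \<and>
     (\<forall>x. cou H (st H x) = cnj (cou H x)) \<and>
     (\<forall>x. sum_list (map (\<lambda>(a,b). sc H (cou H a) b) (cop H x)) = x) \<and>
     (\<forall>x. sum_list (map (\<lambda>(a,b). sc H (cou H b) a) (cop H x)) = x) \<and>
     \<comment> \<open>antipode: linear, m(S (x) id)Delta = m(id (x) S)Delta = eps 1\<close>
     (\<forall>x y. ant H (x + y) = ant H x + ant H y) \<and>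
     (\<forall>c x. ant H (sc H c x) = sc H c (ant H x)) \<and>
     (\<forall>x. sum_list (map (\<lambda>(a,b). ant H a * b) (cop H x)) = sc H (cou H x) 1) \<and>
     (\<forall>x. sum_list (map (\<lambda>(a,b). a * ant H b) (cop H x)) = sc H (cou H x) 1)"

text \<open>Finite-dimensional unitary right corepresentation, written in an orthonormal basis
  e_0..e_(n-1): pi(e_j) = sum_i e_i (x) u i j.\<close>
definition unitary_corep :: "('a::ring_1) hopf_data \<Rightarrow> nat \<Rightarrow> (nat \<Rightarrow> nat \<Rightarrow> 'a) \<Rightarrow> bool" where
  "unitary_corep H n u \<longleftrightarrow>
     (\<forall>i<n. \<forall>j<n. teqH H (cop H (u i j)) (map (\<lambda>k. (u i k, u k j)) [0..<n])) \<and>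
     (\<forall>i<n. \<forall>j<n. cou H (u i j) = (if i = j then 1 else 0)) \<and>
     (\<forall>i<n. \<forall>j<n. (\<Sum>k<n. st H (u k j) * u k i) = (if i = j then 1 else 0))"

definition CQG_algebra :: "('a::ring_1) hopf_data \<Rightarrow> bool" where
  "CQG_algebra H \<longleftrightarrow> hopf_star_algebra H \<and>
     module.span (sc H) {u i j | n u i j. unitary_corep H n u \<and> i < n \<and> j < n} = UNIV"

definition hopf_star_hom ::
  "('a::ring_1) hopf_data \<Rightarrow> ('c::ring_1) hopf_data \<Rightarrow> ('a \<Rightarrow> 'c) \<Rightarrow> bool" where
  "hopf_star_hom A C \<theta> \<longleftrightarrow>
     Vector_Spaces.linear (sc A) (sc C) \<theta> \<and>
     (\<forall>x y. \<theta> (x * y) = \<theta> x * \<theta> y) \<and> \<theta> 1 = 1 \<and>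
     (\<forall>x. \<theta> (st A x) = st C (\<theta> x)) \<and>
     (\<forall>x. teqH C (cop C (\<theta> x)) (map (\<lambda>(a,b). (\<theta> a, \<theta> b)) (cop A x))) \<and>
     (\<forall>x. cou C (\<theta> x) = cou A x) \<and>
     (\<forall>x. ant C (\<theta> x) = \<theta> (ant A x))"

definition right_coideal :: "('a::ring_1) hopf_data \<Rightarrow> 'a set \<Rightarrow> bool" where
  "right_coideal H W \<longleftrightarrow> module.subspace (sc H) W \<and>
     (\<forall>w\<in>W. \<exists>xs. fst ` set xs \<subseteq> W \<and> teqH H (cop H w) xs)"

definition star_subalgebra :: "('a::ring_1) hopf_data \<Rightarrow> 'a set \<Rightarrow> bool" where
  "star_subalgebra H Z \<longleftrightarrow> module.subspace (sc H) Z \<and>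
     (\<forall>x\<in>Z. \<forall>y\<in>Z. x * y \<in> Z) \<and> (\<forall>x\<in>Z. st H x \<in> Z)"

end

theory Submission
  imports Defs "HOL-Library.Function_Algebras"
begin

(*
  The counit cannot vanish on a nonzero subcomodule, so some v in V has eps(v) <> 0. In a CQG
  algebra v is a combination of entries phi_i of rows of finitely many unitary corepresentations;
  stacking them block-diagonally gives one unitary matrix M over a finite index set I with
  Delta(phi_j) = sum_i phi_i (x) M_ij. The coefficient vectors xi in C^I with sum_i xi_i phi_i in V
  form a subspace P, invariant under M because V is a subcomodule. As M is unitary, the orthogonal
  projection Q onto P commutes with M, so psi_j = sum_k Q_kj phi_k is again a row of M, now inside
  V, and eps(psi_j) <> 0 for some j.
  With l_j = eps(psi_j), the element zeta = sum_j conj(l_j) psi_j has eps(zeta) = sum_j |l_j|^2 > 0.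
  Since psi_j - l_j 1 lies in Z, theta kills it, and unitarity of M turns this into
  theta(sum_j conj(l_j) M_ij) = conj(l_i) 1, which says (id (x) theta) Delta(zeta) = zeta (x) 1.
  Finite dimensionality of V is only used to know that V <> 0.
*)

abbreviation linear_functional :: "(complex \<Rightarrow> 'a \<Rightarrow> 'a) \<Rightarrow> ('a::ab_group_add \<Rightarrow> complex) \<Rightarrow> bool" where
  "linear_functional s f \<equiv> Vector_Spaces.linear s ((*) :: complex \<Rightarrow> complex \<Rightarrow> complex) f"

lemma vector_space_complex_mult: "vector_space ((*) :: complex \<Rightarrow> complex \<Rightarrow> complex)"
  by unfold_locales (auto simp: algebra_simps)

lemma linear_functionalI:
  assumes "vector_space s" "\<And>x y. f (x + y) = f x + f y" "\<And>c x. f (s c x) = c * f x"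
  shows "linear_functional s f"
  using assms vector_space_complex_mult unfolding Vector_Spaces.linear_iff by auto

lemma linear_functional_compose:
  "Vector_Spaces.linear s1 s2 \<theta> \<Longrightarrow> linear_functional s2 g \<Longrightarrow> linear_functional s1 (\<lambda>x. g (\<theta> x))"
  using Vector_Spaces.linear_compose[of s1 s2 \<theta> "(*)" g] by (simp add: comp_def)

context
  fixes s1 :: "complex \<Rightarrow> 'a::ab_group_add \<Rightarrow> 'a" and s2 :: "complex \<Rightarrow> 'b::ab_group_add \<Rightarrow> 'b"
    and f :: "'a \<Rightarrow> 'b"
  assumes linear: "Vector_Spaces.linear s1 s2 f"
begin

interpretation module_hom s1 s2 f
  using linear by (rule Vector_Spaces.linear.axioms(3))

lemma lmap_add: "f (x + y) = f x + f y"
  by (rule add)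

lemma lmap_scale: "f (s1 c x) = s2 c (f x)"
  by (rule scale)

lemma lmap_zero: "f 0 = 0"
  by (rule zero)

lemma lmap_diff: "f (x - y) = f x - f y"
  by (rule diff)

lemma lmap_sum: "f (\<Sum>i\<in>F. h i) = (\<Sum>i\<in>F. f (h i))"
  by (rule sum)

lemma lmap_sum_list: "f (sum_list (map h xs)) = sum_list (map (\<lambda>x. f (h x)) xs)"
  by (induction xs) (simp_all add: add)

end

definition coord :: "(complex \<Rightarrow> 'a \<Rightarrow> 'a) \<Rightarrow> 'a::ab_group_add \<Rightarrow> 'a \<Rightarrow> complex" where
  "coord s = module.representation s (vector_space.extend_basis s {})"

context
  fixes s :: "complex \<Rightarrow> 'a::ab_group_add \<Rightarrow> 'a"
  assumes vs: "vector_space s"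
begin

interpretation vector_space s
  by (rule vs)

lemma basis_extend_empty: "independent (extend_basis {})" "span (extend_basis {}) = UNIV"
  using independent_extend_basis[OF independent_empty] span_extend_basis[OF independent_empty]
  by auto

lemma linear_coord: "linear_functional s (\<lambda>v. coord s v b)"
  unfolding coord_def using linear_representation[OF basis_extend_empty] .

lemma finite_coord_support: "finite {b. coord s v b \<noteq> 0}"
  unfolding coord_def by (rule finite_representation)

lemma coord_expansion:
  assumes "finite F" "{b. coord s v b \<noteq> 0} \<subseteq> F"
  shows "(\<Sum>b\<in>F. s (coord s v b) b) = v"
proof -
  have "(\<Sum>b\<in>F. s (coord s v b) b) = (\<Sum>b | coord s v b \<noteq> 0. s (coord s v b) b)"
    using assms by (intro sum.mono_neutral_cong_right) auto
  also have "\<dots> = v"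
    unfolding coord_def using sum_nonzero_representation_eq[OF basis_extend_empty(1)] basis_extend_empty(2)
    by auto
  finally show ?thesis .
qed

lemma functionals_separate_points:
  assumes "\<And>g. linear_functional s g \<Longrightarrow> g x = g y"
  shows "x = y"
proof -
  have "coord s x = coord s y"
    using assms[OF linear_coord] by auto
  then show ?thesis
    using coord_expansion[OF finite_coord_support order_refl] by metis
qed

lemma tensor_eq_bilinear:
  assumes teq: "tensor_eq s s2 xs ys"
    and lin1: "\<And>b. linear_functional s (\<lambda>a. B a b)" and lin2: "\<And>a. linear_functional s2 (\<lambda>b. B a b)"
  shows "sum_list (map (\<lambda>(a,b). B a b) xs) = sum_list (map (\<lambda>(a,b). B a b) ys)"
proof -
  define F where "F = (\<Union>p\<in>set (xs @ ys). {b. coord s (fst p) b \<noteq> 0})"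
  have "finite F"
    unfolding F_def using finite_coord_support by auto
  have expand: "B a b = (\<Sum>\<beta>\<in>F. coord s a \<beta> * B \<beta> b)" if "(a,b) \<in> set (xs @ ys)" for a b
  proof -
    have "{\<beta>. coord s a \<beta> \<noteq> 0} \<subseteq> F"
      unfolding F_def using that by force
    then have "B a b = B (\<Sum>\<beta>\<in>F. s (coord s a \<beta>) \<beta>) b"
      using coord_expansion[OF \<open>finite F\<close>] by simp
    then show ?thesis
      by (simp add: lmap_sum[OF lin1] lmap_scale[OF lin1])
  qed
  have "sum_list (map (\<lambda>(a,b). B a b) zs) = (\<Sum>\<beta>\<in>F. sum_list (map (\<lambda>(a,b). coord s a \<beta> * B \<beta> b) zs))"
    if "set zs \<subseteq> set (xs @ ys)" for zs
    using that by (induction zs) (auto simp: expand sum.distrib)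
  moreover have "sum_list (map (\<lambda>(a,b). coord s a \<beta> * B \<beta> b) xs)
      = sum_list (map (\<lambda>(a,b). coord s a \<beta> * B \<beta> b) ys)" for \<beta>
    using teq linear_coord lin2 unfolding tensor_eq_def by blast
  ultimately show ?thesis
    by simp
qed

end

definition vec_scale :: "complex \<Rightarrow> ('i \<Rightarrow> complex) \<Rightarrow> 'i \<Rightarrow> complex" where
  "vec_scale c v = (\<lambda>i. c * v i)"

lemma vector_space_vec_scale: "vector_space vec_scale"
  by unfold_locales (auto simp: vec_scale_def algebra_simps fun_eq_iff)

definition hermitian :: "('i \<Rightarrow> 'i \<Rightarrow> complex) \<Rightarrow> bool" where
  "hermitian Q \<longleftrightarrow> (\<forall>i j. Q j i = cnj (Q i j))"

definition column :: "'i set \<Rightarrow> ('i \<Rightarrow> 'i \<Rightarrow> complex) \<Rightarrow> 'i \<Rightarrow> 'i \<Rightarrow> complex" where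
  "column I Q j = (\<lambda>i. if i \<in> I then Q i j else 0)"

definition mat_fixes :: "'i set \<Rightarrow> ('i \<Rightarrow> 'i \<Rightarrow> complex) \<Rightarrow> ('i \<Rightarrow> complex) \<Rightarrow> bool" where
  "mat_fixes I Q v \<longleftrightarrow> (\<forall>i\<in>I. (\<Sum>j\<in>I. Q i j * v j) = v i)"

definition hermitian_projection_into ::
  "'i set \<Rightarrow> ('i \<Rightarrow> complex) set \<Rightarrow> ('i \<Rightarrow> 'i \<Rightarrow> complex) \<Rightarrow> bool" where
  "hermitian_projection_into I P Q \<longleftrightarrow> hermitian Q \<and> (\<forall>j\<in>I. column I Q j \<in> P) \<and>
     (\<forall>i\<in>I. \<forall>j\<in>I. (\<Sum>k\<in>I. Q i k * Q k j) = Q i j)"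

definition cinner :: "'i set \<Rightarrow> ('i \<Rightarrow> complex) \<Rightarrow> ('i \<Rightarrow> complex) \<Rightarrow> complex" where
  "cinner I x y = (\<Sum>k\<in>I. cnj (x k) * y k)"

lemma sum_mult_sum_swap:
  fixes a :: "'k \<Rightarrow> 'a::semiring_0"
  shows "(\<Sum>k\<in>I. a k * (\<Sum>j\<in>J. b k j * c j)) = (\<Sum>j\<in>J. (\<Sum>k\<in>I. a k * b k j) * c j)"
  by (simp add: sum_distrib_left sum_distrib_right mult.assoc) (rule sum.swap)

lemma sum_apply: "(\<Sum>i\<in>F. f i) x = (\<Sum>i\<in>F. f i x)"
  by (induction F rule: infinite_finite_induct) auto

lemma cinner_self_nonzero:
  assumes "finite I" "j \<in> I" "x j \<noteq> 0"
  shows "cinner I x x \<noteq> 0"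
proof -
  define S where "S = (\<Sum>k\<in>I. (cmod (x k))\<^sup>2)"
  have "cinner I x x = complex_of_real S"
    unfolding cinner_def S_def of_real_sum
    by (intro sum.cong refl) (metis complex_norm_square mult.commute)
  moreover have "0 < S"
    unfolding S_def using assms by (intro sum_pos2[of I j]) auto
  ultimately show ?thesis
    by simp
qed

lemma cnj_cinner_self: "cnj (cinner I x x) = cinner I x x"
  by (simp add: cinner_def mult.commute)

lemma subspace_mat_fixes: "module.subspace vec_scale (Collect (mat_fixes I Q))"
proof -
  interpret vector_space vec_scale
    by (rule vector_space_vec_scale)
  show ?thesis
    unfolding subspace_def mat_fixes_def
    by (auto simp: vec_scale_def distrib_left sum.distrib mult.left_commute[of _ "_::complex"]
        sum_distrib_left[symmetric])
qed

lemma hermitian_kernel_orthogonal: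
  assumes "hermitian Q" "\<forall>i\<in>I. (\<Sum>k\<in>I. Q i k * r k) = 0" "j \<in> I"
  shows "(\<Sum>k\<in>I. cnj (r k) * Q k j) = 0"
proof -
  have "(\<Sum>k\<in>I. cnj (r k) * Q k j) = (\<Sum>k\<in>I. cnj (Q j k * r k))"
    using assms(1)[unfolded hermitian_def]
    by (intro sum.cong refl) (metis complex_cnj_mult mult.commute)
  also have "\<dots> = cnj (\<Sum>k\<in>I. Q j k * r k)"
    by simp
  finally have "(\<Sum>k\<in>I. cnj (r k) * Q k j) = cnj (\<Sum>k\<in>I. Q j k * r k)" .
  then show ?thesis
    using assms(2,3) by simp
qed

lemma cinner_kernel_fixed:
  assumes "hermitian Q" "\<forall>i\<in>I. (\<Sum>k\<in>I. Q i k * r k) = 0" "mat_fixes I Q s"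
  shows "cinner I r s = 0"
proof -
  have "cinner I r s = (\<Sum>k\<in>I. cnj (r k) * (\<Sum>j\<in>I. Q k j * s j))"
    using assms(3) unfolding cinner_def mat_fixes_def by (intro sum.cong) auto
  also have "\<dots> = 0"
    using hermitian_kernel_orthogonal[OF assms(1,2)] by (simp add: sum_mult_sum_swap)
  finally show ?thesis .
qed

lemma projection_residual:
  fixes v :: "'i \<Rightarrow> complex"
  assumes herm: "hermitian Q" and idem: "\<forall>i\<in>I. \<forall>j\<in>I. (\<Sum>k\<in>I. Q i k * Q k j) = Q i j"
  defines "r \<equiv> v - (\<lambda>i. if i \<in> I then (\<Sum>j\<in>I. Q i j * v j) else 0)"
  shows "\<forall>i\<in>I. (\<Sum>k\<in>I. Q i k * r k) = 0" and "cinner I r v = cinner I r r"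
proof -
  show kernel: "\<forall>i\<in>I. (\<Sum>k\<in>I. Q i k * r k) = 0"
  proof
    fix i assume "i \<in> I"
    have "(\<Sum>k\<in>I. Q i k * r k) = (\<Sum>k\<in>I. Q i k * v k) - (\<Sum>j\<in>I. (\<Sum>k\<in>I. Q i k * Q k j) * v j)"
      by (simp add: r_def right_diff_distrib sum_subtractf sum_mult_sum_swap)
    then show "(\<Sum>k\<in>I. Q i k * r k) = 0"
      using idem \<open>i \<in> I\<close> by simp
  qed
  have "cinner I r v = (\<Sum>k\<in>I. cnj (r k) * (r k + (\<Sum>j\<in>I. Q k j * v j)))"
    unfolding cinner_def by (intro sum.cong refl) (simp add: r_def)
  also have "\<dots> = cinner I r r + (\<Sum>j\<in>I. (\<Sum>k\<in>I. cnj (r k) * Q k j) * v j)"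
    by (simp add: cinner_def distrib_left sum.distrib sum_mult_sum_swap)
  finally show "cinner I r v = cinner I r r"
    using hermitian_kernel_orthogonal[OF herm kernel] by simp
qed

context
  fixes I :: "'i set" and P :: "('i \<Rightarrow> complex) set"
  assumes finite_I: "finite I" and subspace_P: "module.subspace vec_scale P"
    and P_support: "\<And>\<xi> i. \<xi> \<in> P \<Longrightarrow> i \<notin> I \<Longrightarrow> \<xi> i = 0"
begin

interpretation CS: vector_space vec_scale
  by (rule vector_space_vec_scale)

lemma mat_apply_in:
  assumes "\<forall>j\<in>I. column I Q j \<in> P"
  shows "(\<lambda>i. if i \<in> I then (\<Sum>j\<in>I. Q i j * v j) else 0) \<in> P"
proof -
  have "(\<lambda>i. if i \<in> I then (\<Sum>j\<in>I. Q i j * v j) else 0) = (\<Sum>j\<in>I. vec_scale (v j) (column I Q j))"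
    by (auto simp: fun_eq_iff sum_apply vec_scale_def column_def mult.commute)
  also have "\<dots> \<in> P"
    using assms by (intro CS.subspace_sum[OF subspace_P] CS.subspace_scale[OF subspace_P]) auto
  finally show ?thesis .
qed

lemma rank_one_update:
  assumes proj: "hermitian_projection_into I P Q" and "r \<in> P"
    and kernel: "\<forall>i\<in>I. (\<Sum>k\<in>I. Q i k * r k) = 0" and nonzero: "cinner I r r \<noteq> 0"
  shows "hermitian_projection_into I P (\<lambda>i j. Q i j + r i * (cnj (r j) / cinner I r r))"
    and "i \<in> I \<Longrightarrow> (\<Sum>j\<in>I. (Q i j + r i * (cnj (r j) / cinner I r r)) * s j)
           = (\<Sum>j\<in>I. Q i j * s j) + r i * (cinner I r s / cinner I r r)"
proof -
  define q where "q j = cnj (r j) / cinner I r r" for j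
  have herm: "hermitian Q" and cols: "\<forall>j\<in>I. column I Q j \<in> P"
    and idem: "\<forall>i\<in>I. \<forall>j\<in>I. (\<Sum>k\<in>I. Q i k * Q k j) = Q i j"
    using proj unfolding hermitian_projection_into_def by auto
  have qr: "(\<Sum>k\<in>I. q k * r k) = 1"
    using nonzero by (simp add: q_def cinner_def sum_divide_distrib[symmetric])
  have qQ: "(\<Sum>k\<in>I. q k * Q k j) = 0" if "j \<in> I" for j
    using hermitian_kernel_orthogonal[OF herm kernel that]
    by (simp add: q_def sum_divide_distrib[symmetric])
  show "i \<in> I \<Longrightarrow> (\<Sum>j\<in>I. (Q i j + r i * q j) * s j)
      = (\<Sum>j\<in>I. Q i j * s j) + r i * (cinner I r s / cinner I r r)"
    by (simp add: q_def cinner_def distrib_right sum.distrib sum_distrib_left sum_divide_distrib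
        mult.assoc)
  have "hermitian (\<lambda>i j. Q i j + r i * q j)"
    unfolding hermitian_def
  proof (intro allI)
    fix i j
    show "Q j i + r j * q i = cnj (Q i j + r i * q j)"
      using herm[unfolded hermitian_def, rule_format, of i j] cnj_cinner_self[of I r]
      by (simp add: q_def mult.commute)
  qed
  moreover have "column I (\<lambda>i j. Q i j + r i * q j) j \<in> P" if "j \<in> I" for j
  proof -
    have "column I (\<lambda>i j. Q i j + r i * q j) j = column I Q j + vec_scale (q j) r"
      using P_support[OF \<open>r \<in> P\<close>] by (auto simp: fun_eq_iff column_def vec_scale_def mult.commute)
    then show ?thesis
      using cols that \<open>r \<in> P\<close>
      by (auto intro!: CS.subspace_add[OF subspace_P] CS.subspace_scale[OF subspace_P])
  qed
  moreover have "(\<Sum>k\<in>I. (Q i k + r i * q k) * (Q k j + r k * q j)) = Q i j + r i * q j"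
    if "i \<in> I" "j \<in> I" for i j
  proof -
    have "(\<Sum>k\<in>I. (Q i k + r i * q k) * (Q k j + r k * q j))
        = (\<Sum>k\<in>I. Q i k * Q k j) + (\<Sum>k\<in>I. Q i k * r k) * q j
          + r i * (\<Sum>k\<in>I. q k * Q k j) + r i * (\<Sum>k\<in>I. q k * r k) * q j"
      by (simp add: algebra_simps sum.distrib sum_distrib_left sum_distrib_right)
    then show ?thesis
      using idem kernel qQ qr that by simp
  qed
  ultimately show "hermitian_projection_into I P (\<lambda>i j. Q i j + r i * q j)"
    unfolding hermitian_projection_into_def by blast
qed

lemma hermitian_projection_insert:
  assumes proj: "hermitian_projection_into I P Q" and "v \<in> P"
  shows "\<exists>Q'. hermitian_projection_into I P Q' \<and> mat_fixes I Q' v \<and>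
    (\<forall>s. mat_fixes I Q s \<longrightarrow> mat_fixes I Q' s)"
proof -
  have herm: "hermitian Q" and idem: "\<forall>i\<in>I. \<forall>j\<in>I. (\<Sum>k\<in>I. Q i k * Q k j) = Q i j"
    using proj unfolding hermitian_projection_into_def by auto
  define r where "r = v - (\<lambda>i. if i \<in> I then (\<Sum>j\<in>I. Q i j * v j) else 0)"
  have "r \<in> P"
    unfolding r_def using proj \<open>v \<in> P\<close> mat_apply_in
    by (intro CS.subspace_diff[OF subspace_P]) (auto simp: hermitian_projection_into_def)
  note kernel = projection_residual(1)[OF herm idem, of v, folded r_def]
  show ?thesis
  proof (cases "\<forall>i\<in>I. r i = 0")
    case True
    then have "mat_fixes I Q v"
      unfolding mat_fixes_def r_def by simp
    then show ?thesis
      using proj by blast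
  next
    case False
    then have nonzero: "cinner I r r \<noteq> 0"
      using cinner_self_nonzero[OF finite_I] by blast
    note update = rank_one_update[OF proj \<open>r \<in> P\<close> kernel nonzero]
    have "mat_fixes I (\<lambda>i j. Q i j + r i * (cnj (r j) / cinner I r r)) s"
      if "mat_fixes I Q s \<or> s = v" for s
      unfolding mat_fixes_def
    proof
      fix i assume "i \<in> I"
      show "(\<Sum>j\<in>I. (Q i j + r i * (cnj (r j) / cinner I r r)) * s j) = s i"
        using that
      proof
        assume "mat_fixes I Q s"
        then show ?thesis
          using update(2)[OF \<open>i \<in> I\<close>, of s] cinner_kernel_fixed[OF herm kernel]
          unfolding mat_fixes_def using \<open>i \<in> I\<close> by simp
      next
        assume "s = v"
        then show ?thesis
          using update(2)[OF \<open>i \<in> I\<close>, of v] projection_residual(2)[OF herm idem, of v, folded r_def]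
            nonzero \<open>i \<in> I\<close> by (simp add: r_def)
      qed
    qed
    then show ?thesis
      using update(1) by blast
  qed
qed

lemma hermitian_projection_exists_finite:
  "finite S \<Longrightarrow> S \<subseteq> P \<Longrightarrow> \<exists>Q. hermitian_projection_into I P Q \<and> (\<forall>v\<in>S. mat_fixes I Q v)"
proof (induction S rule: finite_induct)
  case empty
  have "column I (\<lambda>i j. 0) j = 0" for j
    by (simp add: column_def fun_eq_iff)
  then have "hermitian_projection_into I P (\<lambda>i j. 0)"
    using CS.subspace_0[OF subspace_P] by (simp add: hermitian_projection_into_def hermitian_def)
  then show ?case
    by blast
next
  case (insert v S)
  then obtain Q where "hermitian_projection_into I P Q" "\<forall>s\<in>S. mat_fixes I Q s"
    by auto
  then show ?case
    using hermitian_projection_insert[of Q v] insert.prems by blast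
qed

lemma hermitian_projection_onto_exists:
  "\<exists>Q. hermitian_projection_into I P Q \<and> (\<forall>\<xi>\<in>P. mat_fixes I Q \<xi>)"
proof -
  define E where "E = (\<lambda>i j. if j = i then (1::complex) else 0) ` I"
  have "P \<subseteq> CS.span E"
  proof
    fix \<xi> assume "\<xi> \<in> P"
    then have "\<xi> = (\<Sum>i\<in>I. vec_scale (\<xi> i) (\<lambda>j. if j = i then 1 else 0))"
      using P_support finite_I
      by (auto simp: fun_eq_iff sum_apply vec_scale_def if_distrib[of "\<lambda>x. _ * x"] sum.delta'
          cong: if_cong)
    also have "\<dots> \<in> CS.span E"
      by (intro CS.span_sum CS.span_scale CS.span_base) (auto simp: E_def)
    finally show "\<xi> \<in> CS.span E" .
  qed
  obtain B where B: "B \<subseteq> P" "CS.independent B" "P \<subseteq> CS.span B"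
    using CS.maximal_independent_subset[of P] by blast
  have "finite B"
    using CS.independent_span_bound[of E B] B \<open>P \<subseteq> CS.span E\<close> finite_I by (auto simp: E_def)
  then obtain Q where Q: "hermitian_projection_into I P Q" "\<forall>v\<in>B. mat_fixes I Q v"
    using hermitian_projection_exists_finite B(1) by blast
  have "P \<subseteq> Collect (mat_fixes I Q)"
    using B(3) CS.span_minimal[OF _ subspace_mat_fixes, of B] Q(2) by blast
  then show ?thesis
    using Q(1) by blast
qed

end

definition cop_apply ::
  "'a::ring_1 hopf_data \<Rightarrow> ('a \<Rightarrow> complex) \<Rightarrow> ('a \<Rightarrow> complex) \<Rightarrow> 'a \<Rightarrow> complex" where
  "cop_apply H f g x = sum_list (map (\<lambda>(a,b). f a * g b) (cop H x))"

definition corep_row :: "'a::ring_1 hopf_data \<Rightarrow> 'i set \<Rightarrow> ('i \<Rightarrow> 'i \<Rightarrow> 'a) \<Rightarrow> ('i \<Rightarrow> 'a) \<Rightarrow> bool" where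
  "corep_row H I M \<phi> \<longleftrightarrow>
     (\<forall>f g j. linear_functional (sc H) f \<longrightarrow> linear_functional (sc H) g \<longrightarrow> j \<in> I \<longrightarrow>
        cop_apply H f g (\<phi> j) = (\<Sum>i\<in>I. f (\<phi> i) * g (M i j)))"

(* The two consequences of unitarity of a corepresentation matrix that are used: M^* = S(M) and
   M M^* = 1. *)
definition unitary_matrix :: "'a::ring_1 hopf_data \<Rightarrow> 'i set \<Rightarrow> ('i \<Rightarrow> 'i \<Rightarrow> 'a) \<Rightarrow> bool" where
  "unitary_matrix H I M \<longleftrightarrow> (\<forall>i\<in>I. \<forall>j\<in>I. st H (M j i) = ant H (M i j)) \<and>
     (\<forall>i\<in>I. \<forall>k\<in>I. (\<Sum>j\<in>I. M i j * st H (M k j)) = (if i = k then 1 else 0))"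

definition block_diag :: "('t \<Rightarrow> 'i \<Rightarrow> 'i \<Rightarrow> 'a::zero) \<Rightarrow> 't \<times> 'i \<Rightarrow> 't \<times> 'i \<Rightarrow> 'a" where
  "block_diag M x y = (if fst x = fst y then M (fst x) (snd x) (snd y) else 0)"

locale hopf_star =
  fixes H :: "'a::ring_1 hopf_data"
  assumes hopf_star_algebra: "hopf_star_algebra H"
begin

lemmas hopf_axioms = hopf_star_algebra[unfolded hopf_star_algebra_def]

sublocale vs: vector_space "sc H"
  using hopf_axioms by (elim conjE) metis

lemma scale_mult_left: "sc H c (x * y) = sc H c x * y"
  using hopf_axioms by (elim conjE) metis

lemma scale_mult_right: "sc H c (x * y) = x * sc H c y"
  using hopf_axioms by (elim conjE) metis

lemma star_star: "st H (st H x) = x"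
  using hopf_axioms by (elim conjE) metis

lemma star_add: "st H (x + y) = st H x + st H y"
  using hopf_axioms by (elim conjE) metis

lemma star_scale: "st H (sc H c x) = sc H (cnj c) (st H x)"
  using hopf_axioms by (elim conjE) metis

lemma star_mult: "st H (x * y) = st H y * st H x"
  using hopf_axioms by (elim conjE) metis

lemma cop_add: "teqH H (cop H (x + y)) (cop H x @ cop H y)"
  using hopf_axioms by (elim conjE) metis

lemma cop_scale: "teqH H (cop H (sc H c x)) (map (\<lambda>(a,b). (sc H c a, b)) (cop H x))"
  using hopf_axioms by (elim conjE) metis

lemma counit_left: "sum_list (map (\<lambda>(a,b). sc H (cou H a) b) (cop H x)) = x"
  using hopf_axioms by (elim conjE) metis

lemma antipode_right: "sum_list (map (\<lambda>(a,b). a * ant H b) (cop H x)) = sc H (cou H x) 1"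
  using hopf_axioms by (elim conjE) metis

lemma ant_add: "ant H (x + y) = ant H x + ant H y"
  using hopf_axioms by (elim conjE) metis

lemma ant_scale: "ant H (sc H c x) = sc H c (ant H x)"
  using hopf_axioms by (elim conjE) metis

lemma linear_cou: "linear_functional (sc H) (cou H)"
  using hopf_axioms by (elim conjE, intro linear_functionalI) metis+

lemma star_zero: "st H 0 = 0"
  using star_add[of 0 0] by simp

lemma star_diff: "st H (x - y) = st H x - st H y"
  using star_add[of "x - y" y] by (simp add: algebra_simps)

lemma star_one: "st H 1 = 1"
  using star_mult[of "st H 1" 1] by (simp add: star_star)

lemma star_comb: "st H (\<Sum>j\<in>J. sc H (a j) (c j)) = (\<Sum>j\<in>J. sc H (cnj (a j)) (st H (c j)))"
  by (induction J rule: infinite_finite_induct) (simp_all add: star_zero star_add star_scale)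

lemma ant_zero: "ant H 0 = 0"
  using ant_add[of 0 0] by simp

lemma ant_comb: "ant H (\<Sum>j\<in>J. sc H (a j) (c j)) = (\<Sum>j\<in>J. sc H (a j) (ant H (c j)))"
  by (induction J rule: infinite_finite_induct) (simp_all add: ant_zero ant_add ant_scale)

lemma functional_ext: "(\<And>g. linear_functional (sc H) g \<Longrightarrow> g x = g y) \<Longrightarrow> x = y"
  by (rule functionals_separate_points[OF vs.vector_space_axioms])

lemma linear_cop_apply:
  assumes f: "linear_functional (sc H) f" and g: "linear_functional (sc H) g"
  shows "linear_functional (sc H) (cop_apply H f g)"
proof (rule linear_functionalI[OF vs.vector_space_axioms])
  show "cop_apply H f g (x + y) = cop_apply H f g x + cop_apply H f g y" for x y
    using cop_add[of x y] f g unfolding tensor_eq_def cop_apply_def by auto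
  show "cop_apply H f g (sc H c x) = c * cop_apply H f g x" for c x
  proof -
    have "cop_apply H f g (sc H c x) = sum_list (map (\<lambda>(a,b). f (sc H c a) * g b) (cop H x))"
      using cop_scale[of c x] f g unfolding tensor_eq_def cop_apply_def
      by (auto simp: case_prod_unfold comp_def)
    also have "\<dots> = c * cop_apply H f g x"
      unfolding cop_apply_def
      by (simp add: lmap_scale[OF f] case_prod_unfold mult.assoc sum_list_const_mult[symmetric])
    finally show ?thesis .
  qed
qed

lemma cop_apply_counit:
  assumes g: "linear_functional (sc H) g"
  shows "cop_apply H (cou H) g x = g x"
proof -
  have "g x = sum_list (map (\<lambda>p. g (case p of (a,b) \<Rightarrow> sc H (cou H a) b)) (cop H x))"
    using lmap_sum_list[OF g] counit_left by metis
  then show ?thesis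
    unfolding cop_apply_def by (simp add: case_prod_unfold lmap_scale[OF g])
qed

lemma unitary_antipode:
  assumes u: "unitary_corep H n u" and "i < n" "j < n"
  shows "(\<Sum>k<n. u i k * ant H (u k j)) = (if i = j then 1 else 0)"
proof (rule functional_ext)
  fix g assume g: "linear_functional (sc H) g"
  define B where "B a b = g (a * ant H b)" for a b
  have lin1: "linear_functional (sc H) (\<lambda>a. B a b)" for b
    unfolding B_def
    by (rule linear_functionalI[OF vs.vector_space_axioms])
       (simp_all add: distrib_right lmap_add[OF g] lmap_scale[OF g] scale_mult_left[symmetric])
  have lin2: "linear_functional (sc H) (\<lambda>b. B a b)" for a
    unfolding B_def
    by (rule linear_functionalI[OF vs.vector_space_axioms])
       (simp_all add: distrib_left ant_add ant_scale lmap_add[OF g] lmap_scale[OF g]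
         scale_mult_right[symmetric])
  have teq: "teqH H (cop H (u i j)) (map (\<lambda>k. (u i k, u k j)) [0..<n])"
    using u assms unfolding unitary_corep_def by auto
  have "g (\<Sum>k<n. u i k * ant H (u k j))
      = sum_list (map (\<lambda>(a,b). B a b) (map (\<lambda>k. (u i k, u k j)) [0..<n]))"
    by (simp add: lmap_sum[OF g] B_def sum_list_sum_nth atLeast0LessThan)
  also have "\<dots> = sum_list (map (\<lambda>(a,b). B a b) (cop H (u i j)))"
    by (rule tensor_eq_bilinear[OF vs.vector_space_axioms teq lin1 lin2, symmetric])
  also have "\<dots> = g (sc H (cou H (u i j)) 1)"
    unfolding B_def antipode_right[symmetric] lmap_sum_list[OF g] by (simp add: case_prod_unfold)
  also have "\<dots> = g (if i = j then 1 else 0)"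
    using u assms unfolding unitary_corep_def by auto
  finally show "g (\<Sum>k<n. u i k * ant H (u k j)) = g (if i = j then 1 else 0)" .
qed

lemma unitary_star_eq_antipode:
  assumes u: "unitary_corep H n u" and "i < n" "j < n"
  shows "st H (u j i) = ant H (u i j)"
proof -
  have "ant H (u i j) = (\<Sum>c<n. (\<Sum>k<n. st H (u k i) * u k c) * ant H (u c j))"
    using u \<open>i < n\<close> unfolding unitary_corep_def
    by (simp add: if_distrib[of "\<lambda>x. x * _"] sum.delta cong: if_cong)
  also have "\<dots> = (\<Sum>k<n. st H (u k i) * (\<Sum>c<n. u k c * ant H (u c j)))"
    by (simp add: sum_mult_sum_swap)
  also have "\<dots> = st H (u j i)"
    using unitary_antipode[OF u] \<open>j < n\<close>
    by (simp add: if_distrib[of "\<lambda>x. _ * x"] sum.delta cong: if_cong)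
  finally show ?thesis
    by simp
qed

lemma unitary_corep_unitary_matrix:
  assumes u: "unitary_corep H n u"
  shows "unitary_matrix H {..<n} u"
  using unitary_star_eq_antipode[OF u] unitary_antipode[OF u]
  unfolding unitary_matrix_def by simp

lemma unitary_corep_row:
  assumes u: "unitary_corep H n u" and "i < n"
  shows "corep_row H {..<n} u (u i)"
  unfolding corep_row_def
proof (intro allI impI)
  fix f g j
  assume f: "linear_functional (sc H) f" and g: "linear_functional (sc H) g" and "j \<in> {..<n}"
  then have "teqH H (cop H (u i j)) (map (\<lambda>k. (u i k, u k j)) [0..<n])"
    using u \<open>i < n\<close> unfolding unitary_corep_def by auto
  then show "cop_apply H f g (u i j) = (\<Sum>k\<in>{..<n}. f (u i k) * g (u k j))"
    using f g unfolding cop_apply_def tensor_eq_def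
    by (simp add: sum_list_sum_nth atLeast0LessThan)
qed

lemma corep_row_Sigma:
  assumes "finite T" "\<And>t. t \<in> T \<Longrightarrow> finite (J t)"
    and rows: "\<And>t. t \<in> T \<Longrightarrow> corep_row H (J t) (M t) (\<phi> t)"
  shows "corep_row H (Sigma T J) (block_diag M) (\<lambda>x. \<phi> (fst x) (snd x))"
  unfolding corep_row_def
proof (intro allI impI)
  fix f g y assume f: "linear_functional (sc H) f" and g: "linear_functional (sc H) g"
    and "y \<in> Sigma T J"
  then obtain t b where y: "y = (t, b)" "t \<in> T" "b \<in> J t"
    by auto
  have "(\<Sum>x\<in>Sigma T J. f (\<phi> (fst x) (snd x)) * g (block_diag M x y))
      = (\<Sum>s\<in>T. \<Sum>k\<in>J s. f (\<phi> s k) * g (block_diag M (s, k) y))"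
    using assms(1,2) by (simp add: sum.Sigma split_def)
  also have "\<dots> = (\<Sum>s\<in>T. if s = t then (\<Sum>k\<in>J t. f (\<phi> t k) * g (M t k b)) else 0)"
    by (intro sum.cong refl) (auto simp: block_diag_def y(1) lmap_zero[OF g])
  also have "\<dots> = cop_apply H f g (\<phi> t b)"
    using rows[OF y(2)] f g y(3) assms(1) y(2) unfolding corep_row_def by simp
  finally show "cop_apply H f g (\<phi> (fst y) (snd y))
      = (\<Sum>x\<in>Sigma T J. f (\<phi> (fst x) (snd x)) * g (block_diag M x y))"
    using y(1) by simp
qed

lemma unitary_matrix_Sigma:
  assumes "finite T" "\<And>t. t \<in> T \<Longrightarrow> finite (J t)"
    and unitary: "\<And>t. t \<in> T \<Longrightarrow> unitary_matrix H (J t) (M t)"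
  shows "unitary_matrix H (Sigma T J) (block_diag M)"
  unfolding unitary_matrix_def
proof (intro conjI ballI)
  fix x y assume "x \<in> Sigma T J" "y \<in> Sigma T J"
  then show "st H (block_diag M y x) = ant H (block_diag M x y)"
    using unitary unfolding unitary_matrix_def block_diag_def
    by (auto simp: star_zero ant_zero)
next
  fix x y assume "x \<in> Sigma T J" "y \<in> Sigma T J"
  then obtain t a s b where xy: "x = (t, a)" "y = (s, b)" "t \<in> T" "a \<in> J t" "s \<in> T" "b \<in> J s"
    by auto
  have "(\<Sum>z\<in>Sigma T J. block_diag M x z * st H (block_diag M y z))
      = (\<Sum>r\<in>T. \<Sum>k\<in>J r. block_diag M x (r, k) * st H (block_diag M y (r, k)))"
    using assms(1,2) by (simp add: sum.Sigma split_def)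
  also have "\<dots> = (\<Sum>r\<in>T. if r = t
      then (\<Sum>k\<in>J t. block_diag M x (t, k) * st H (block_diag M y (t, k))) else 0)"
    by (intro sum.cong refl) (auto simp: block_diag_def xy(1))
  also have "\<dots> = (\<Sum>k\<in>J t. block_diag M x (t, k) * st H (block_diag M y (t, k)))"
    using assms(1) xy(3) by simp
  also have "\<dots> = (if x = y then 1 else 0)"
  proof (cases "s = t")
    case True
    then show ?thesis
      using unitary[OF xy(3), unfolded unitary_matrix_def, THEN conjunct2] xy
      unfolding block_diag_def by simp
  next
    case False
    then show ?thesis
      using xy unfolding block_diag_def by (simp add: star_zero)
  qed
  finally show "(\<Sum>z\<in>Sigma T J. block_diag M x z * st H (block_diag M y z))
      = (if x = y then 1 else 0)" .
qed

end

definition coeff_space ::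
  "'a::ring_1 hopf_data \<Rightarrow> 'i set \<Rightarrow> ('i \<Rightarrow> 'a) \<Rightarrow> 'a set \<Rightarrow> ('i \<Rightarrow> complex) set" where
  "coeff_space H I \<phi> V = {\<xi>. (\<forall>i. i \<notin> I \<longrightarrow> \<xi> i = 0) \<and> (\<Sum>i\<in>I. sc H (\<xi> i) (\<phi> i)) \<in> V}"

context hopf_star
begin

lemma CQG_row_expansion:
  assumes "CQG_algebra H"
  obtains I :: "('a \<times> nat) set" and M \<phi> p
  where "finite I" "corep_row H I M \<phi>" "unitary_matrix H I M" "\<forall>i. i \<notin> I \<longrightarrow> p i = 0"
    "v = (\<Sum>i\<in>I. sc H (p i) (\<phi> i))"
proof -
  define coeffs where "coeffs = {u i j | n u i j. unitary_corep H n u \<and> i < n \<and> j < n}"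
  have "v \<in> vs.span coeffs"
    using assms unfolding CQG_algebra_def coeffs_def by auto
  then obtain T c where T: "finite T" "T \<subseteq> coeffs" and v: "v = (\<Sum>t\<in>T. sc H (c t) t)"
    unfolding vs.span_explicit by blast
  have "\<forall>t\<in>T. \<exists>n u i j. unitary_corep H n u \<and> i < n \<and> j < n \<and> u i j = t"
    using T(2) unfolding coeffs_def by blast
  then obtain n u i0 j0 where coeff: "\<And>t. t \<in> T \<Longrightarrow>
      unitary_corep H (n t) (u t) \<and> i0 t < n t \<and> j0 t < n t \<and> u t (i0 t) (j0 t) = t"
    by metis
  define I where "I = Sigma T (\<lambda>t. {..<n t})"
  define p where "p x = (if x \<in> I \<and> snd x = j0 (fst x) then c (fst x) else 0)" for x
  show ?thesis
  proof (rule that)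
    show "finite I"
      unfolding I_def using T(1) by auto
    show "corep_row H I (block_diag u) (\<lambda>x. u (fst x) (i0 (fst x)) (snd x))"
      unfolding I_def using T(1) coeff by (intro corep_row_Sigma unitary_corep_row) auto
    show "unitary_matrix H I (block_diag u)"
      unfolding I_def using T(1) coeff
      by (intro unitary_matrix_Sigma unitary_corep_unitary_matrix) auto
    show "\<forall>x. x \<notin> I \<longrightarrow> p x = 0"
      by (simp add: p_def)
    have block: "(\<Sum>k<n t. sc H (p (t, k)) (u t (i0 t) k)) = sc H (c t) t" if "t \<in> T" for t
    proof -
      have "(\<Sum>k<n t. sc H (p (t, k)) (u t (i0 t) k))
          = (\<Sum>k<n t. if k = j0 t then sc H (c t) (u t (i0 t) k) else 0)"
        by (intro sum.cong refl) (simp add: p_def I_def that)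
      then show ?thesis
        using coeff[OF that] by simp
    qed
    have "(\<Sum>x\<in>I. sc H (p x) (u (fst x) (i0 (fst x)) (snd x)))
        = (\<Sum>t\<in>T. \<Sum>k<n t. sc H (p (t, k)) (u t (i0 t) k))"
      unfolding I_def using T(1) by (subst sum.Sigma) (auto simp: split_def)
    also have "\<dots> = v"
      unfolding v using block by (intro sum.cong) auto
    finally show "v = (\<Sum>x\<in>I. sc H (p x) (u (fst x) (i0 (fst x)) (snd x)))"
      by simp
  qed
qed

lemma right_coideal_slice:
  assumes "right_coideal H V" "v \<in> V" and g: "linear_functional (sc H) g"
  obtains w where "w \<in> V" "\<And>f. linear_functional (sc H) f \<Longrightarrow> f w = cop_apply H f g v"
proof -
  have V: "vs.subspace V"
    using assms(1) unfolding right_coideal_def by blast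
  obtain xs where xs: "fst ` set xs \<subseteq> V" "teqH H (cop H v) xs"
    using assms(1,2) unfolding right_coideal_def by blast
  define w where "w = sum_list (map (\<lambda>(a,b). sc H (g b) a) xs)"
  have "set ys \<subseteq> set xs \<Longrightarrow> sum_list (map (\<lambda>(a,b). sc H (g b) a) ys) \<in> V" for ys
    using xs(1)
    by (induction ys) (auto intro!: vs.subspace_add[OF V] vs.subspace_scale[OF V] vs.subspace_0[OF V])
  then have "w \<in> V"
    unfolding w_def by simp
  moreover have "f w = cop_apply H f g v" if f: "linear_functional (sc H) f" for f
  proof -
    have "f w = sum_list (map (\<lambda>(a,b). f a * g b) xs)"
      unfolding w_def lmap_sum_list[OF f]
      by (simp add: case_prod_unfold lmap_scale[OF f] mult.commute)
    then show ?thesis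
      using xs(2) f g unfolding cop_apply_def tensor_eq_def by metis
  qed
  ultimately show ?thesis
    using that by blast
qed

lemma right_coideal_counit_nonzero:
  assumes "right_coideal H V" "v \<in> V" "v \<noteq> 0"
  obtains v' where "v' \<in> V" "cou H v' \<noteq> 0"
proof (rule ccontr)
  assume "\<not> thesis"
  then have counit_zero: "cou H x = 0" if "x \<in> V" for x
    using that \<open>\<And>v'. v' \<in> V \<Longrightarrow> cou H v' \<noteq> 0 \<Longrightarrow> thesis\<close> by blast
  obtain xs where xs: "fst ` set xs \<subseteq> V" "teqH H (cop H v) xs"
    using assms(1,2) unfolding right_coideal_def by blast
  have "v = 0"
  proof (rule functional_ext)
    fix g assume g: "linear_functional (sc H) g"
    have "g v = cop_apply H (cou H) g v"
      by (simp add: cop_apply_counit[OF g])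
    also have "\<dots> = sum_list (map (\<lambda>(a,b). cou H a * g b) xs)"
      using xs(2) linear_cou g unfolding cop_apply_def tensor_eq_def by blast
    also have "\<dots> = 0"
      using xs(1) counit_zero by (induction xs) auto
    finally show "g v = g 0"
      by (simp add: lmap_zero[OF g])
  qed
  then show False
    using assms(3) by simp
qed

lemma subspace_coeff_space:
  assumes "vs.subspace V"
  shows "module.subspace vec_scale (coeff_space H I \<phi> V)"
proof -
  interpret CS: vector_space vec_scale
    by (rule vector_space_vec_scale)
  have comb_scale: "(\<Sum>i\<in>I. sc H (c * \<xi> i) (\<phi> i)) = sc H c (\<Sum>i\<in>I. sc H (\<xi> i) (\<phi> i))" for c \<xi>
    by (simp add: vs.scale_sum_right)
  have comb_add: "(\<Sum>i\<in>I. sc H (\<xi> i + \<eta> i) (\<phi> i))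
      = (\<Sum>i\<in>I. sc H (\<xi> i) (\<phi> i)) + (\<Sum>i\<in>I. sc H (\<eta> i) (\<phi> i))" for \<xi> \<eta>
    by (simp add: vs.scale_left_distrib sum.distrib)
  show ?thesis
    unfolding CS.subspace_def coeff_space_def
    using vs.subspace_0[OF assms] vs.subspace_add[OF assms] vs.subspace_scale[OF assms]
    by (auto simp: comb_scale comb_add vec_scale_def)
qed

lemma coeff_space_invariant:
  assumes "right_coideal H V" and row: "corep_row H I M \<phi>"
    and "\<xi> \<in> coeff_space H I \<phi> V" and g: "linear_functional (sc H) g"
  shows "(\<lambda>i. if i \<in> I then g (\<Sum>j\<in>I. sc H (\<xi> j) (M i j)) else 0) \<in> coeff_space H I \<phi> V"
    (is "?\<eta> \<in> _")
proof -
  have "(\<Sum>i\<in>I. sc H (\<xi> i) (\<phi> i)) \<in> V"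
    using assms(3) unfolding coeff_space_def by blast
  then obtain w where w: "w \<in> V"
    "\<And>f. linear_functional (sc H) f \<Longrightarrow> f w = cop_apply H f g (\<Sum>i\<in>I. sc H (\<xi> i) (\<phi> i))"
    using right_coideal_slice[OF assms(1) _ g] by blast
  have "w = (\<Sum>i\<in>I. sc H (?\<eta> i) (\<phi> i))"
  proof (rule functional_ext)
    fix f assume f: "linear_functional (sc H) f"
    have "f w = (\<Sum>j\<in>I. \<xi> j * (\<Sum>i\<in>I. f (\<phi> i) * g (M i j)))"
      using w(2)[OF f] row f g unfolding corep_row_def
      by (simp add: lmap_sum[OF linear_cop_apply[OF f g]] lmap_scale[OF linear_cop_apply[OF f g]])
    also have "\<dots> = (\<Sum>i\<in>I. f (\<phi> i) * (\<Sum>j\<in>I. \<xi> j * g (M i j)))"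
      by (simp add: sum_distrib_left mult.left_commute) (rule sum.swap)
    also have "\<dots> = f (\<Sum>i\<in>I. sc H (?\<eta> i) (\<phi> i))"
      by (simp add: lmap_sum[OF f] lmap_scale[OF f] lmap_sum[OF g] lmap_scale[OF g] mult.commute)
    finally show "f w = f (\<Sum>i\<in>I. sc H (?\<eta> i) (\<phi> i))" .
  qed
  then show ?thesis
    using w(1) unfolding coeff_space_def by auto
qed

end

context hopf_star
begin

(* Applying the antipode and then the involution to QMQ = MQ gives QMQ = QM, because M^* = S(M)
   and Q is Hermitian. *)
lemma projection_commutes:
  assumes herm: "hermitian Q" and star_ant: "\<And>i j. i \<in> I \<Longrightarrow> j \<in> I \<Longrightarrow> st H (M j i) = ant H (M i j)"
    and QMQ: "\<And>i j. i \<in> I \<Longrightarrow> j \<in> I \<Longrightarrow>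
      (\<Sum>l\<in>I. sc H (Q i l) (\<Sum>k\<in>I. sc H (Q k j) (M l k))) = (\<Sum>k\<in>I. sc H (Q k j) (M i k))"
    and "i \<in> I" "j \<in> I"
  shows "(\<Sum>k\<in>I. sc H (Q i k) (M k j)) = (\<Sum>k\<in>I. sc H (Q k j) (M i k))"
proof -
  define X where "X i j = (\<Sum>k\<in>I. sc H (Q k j) (M i k))" for i j
  have cnj_Q: "cnj (Q i j) = Q j i" for i j
    using herm unfolding hermitian_def by metis
  have adjoint: "st H (ant H (X j i)) = (\<Sum>k\<in>I. sc H (Q i k) (M k j))" if "j \<in> I" for i j
    unfolding X_def ant_comb star_comb
    by (intro sum.cong refl) (simp add: star_ant[OF that, symmetric] star_star cnj_Q)
  have "(\<Sum>k\<in>I. sc H (Q i k) (M k j)) = st H (ant H (\<Sum>l\<in>I. sc H (Q j l) (X l i)))"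
    using adjoint[OF \<open>j \<in> I\<close>, of i] QMQ[OF \<open>j \<in> I\<close> \<open>i \<in> I\<close>] by (simp add: X_def)
  also have "\<dots> = (\<Sum>l\<in>I. sc H (Q l j) (\<Sum>k\<in>I. sc H (Q i k) (M k l)))"
    unfolding ant_comb star_comb using adjoint by (intro sum.cong refl) (simp add: cnj_Q)
  also have "\<dots> = (\<Sum>k\<in>I. sc H (Q i k) (X k j))"
    unfolding X_def vs.scale_sum_right vs.scale_scale by (subst sum.swap) (simp add: mult.commute)
  also have "\<dots> = X i j"
    using QMQ[OF assms(4,5)] by (simp add: X_def)
  finally show ?thesis
    by (simp add: X_def)
qed

lemma corep_row_mix:
  assumes row: "corep_row H I M \<phi>"
    and comm: "\<And>i j. i \<in> I \<Longrightarrow> j \<in> I \<Longrightarrow>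
      (\<Sum>k\<in>I. sc H (Q i k) (M k j)) = (\<Sum>k\<in>I. sc H (Q k j) (M i k))"
  shows "corep_row H I M (\<lambda>j. \<Sum>k\<in>I. sc H (Q k j) (\<phi> k))"
  unfolding corep_row_def
proof (intro allI impI)
  fix f g j assume f: "linear_functional (sc H) f" and g: "linear_functional (sc H) g" and "j \<in> I"
  note E = linear_cop_apply[OF f g]
  have "cop_apply H f g (\<Sum>k\<in>I. sc H (Q k j) (\<phi> k)) = (\<Sum>k\<in>I. Q k j * (\<Sum>i\<in>I. f (\<phi> i) * g (M i k)))"
    using row f g unfolding corep_row_def by (simp add: lmap_sum[OF E] lmap_scale[OF E])
  also have "\<dots> = (\<Sum>i\<in>I. f (\<phi> i) * g (\<Sum>k\<in>I. sc H (Q k j) (M i k)))"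
    by (simp add: lmap_sum[OF g] lmap_scale[OF g] sum_distrib_left mult.left_commute)
      (rule sum.swap)
  also have "\<dots> = (\<Sum>i\<in>I. f (\<phi> i) * (\<Sum>l\<in>I. Q i l * g (M l j)))"
    using \<open>j \<in> I\<close>
    by (intro sum.cong refl) (simp add: comm[symmetric] lmap_sum[OF g] lmap_scale[OF g])
  also have "\<dots> = (\<Sum>l\<in>I. (\<Sum>i\<in>I. f (\<phi> i) * Q i l) * g (M l j))"
    by (rule sum_mult_sum_swap)
  also have "\<dots> = (\<Sum>l\<in>I. f (\<Sum>k\<in>I. sc H (Q k l) (\<phi> k)) * g (M l j))"
    by (simp add: lmap_sum[OF f] lmap_scale[OF f] mult.commute)
  finally show "cop_apply H f g (\<Sum>k\<in>I. sc H (Q k j) (\<phi> k))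
      = (\<Sum>l\<in>I. f (\<Sum>k\<in>I. sc H (Q k l) (\<phi> k)) * g (M l j))" .
qed

lemma coeff_projection_QMQ:
  assumes coideal: "right_coideal H V" and row: "corep_row H I M \<phi>"
    and cols: "\<forall>j\<in>I. column I Q j \<in> coeff_space H I \<phi> V"
    and fixed: "\<forall>\<xi>\<in>coeff_space H I \<phi> V. mat_fixes I Q \<xi>" and "i \<in> I" "j \<in> I"
  shows "(\<Sum>l\<in>I. sc H (Q i l) (\<Sum>k\<in>I. sc H (Q k j) (M l k))) = (\<Sum>k\<in>I. sc H (Q k j) (M i k))"
proof (rule functional_ext)
  fix g assume g: "linear_functional (sc H) g"
  define \<eta> where "\<eta> l = (if l \<in> I then g (\<Sum>k\<in>I. sc H (Q k j) (M l k)) else 0)" for l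
  have col: "(\<Sum>k\<in>I. sc H (column I Q j k) (M l k)) = (\<Sum>k\<in>I. sc H (Q k j) (M l k))" for l
    by (intro sum.cong refl) (simp add: column_def)
  have "\<eta> \<in> coeff_space H I \<phi> V"
    using coeff_space_invariant[OF coideal row cols[rule_format, OF \<open>j \<in> I\<close>] g]
    unfolding \<eta>_def col .
  then have "(\<Sum>l\<in>I. Q i l * \<eta> l) = \<eta> i"
    using fixed \<open>i \<in> I\<close> unfolding mat_fixes_def by blast
  then show "g (\<Sum>l\<in>I. sc H (Q i l) (\<Sum>k\<in>I. sc H (Q k j) (M l k))) = g (\<Sum>k\<in>I. sc H (Q k j) (M i k))"
    using \<open>i \<in> I\<close> by (simp add: \<eta>_def lmap_sum[OF g] lmap_scale[OF g])
qed

lemma coideal_contains_corep_row: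
  assumes "finite I" and coideal: "right_coideal H V" and row: "corep_row H I M \<phi>"
    and unitary: "unitary_matrix H I M"
    and p: "p \<in> coeff_space H I \<phi> V" and nonzero: "cou H (\<Sum>i\<in>I. sc H (p i) (\<phi> i)) \<noteq> 0"
  obtains \<psi> where "\<forall>j\<in>I. \<psi> j \<in> V" "corep_row H I M \<psi>" "\<exists>j\<in>I. cou H (\<psi> j) \<noteq> 0"
proof -
  let ?P = "coeff_space H I \<phi> V"
  have V: "vs.subspace V"
    using coideal unfolding right_coideal_def by blast
  have support: "\<xi> i = 0" if "\<xi> \<in> ?P" "i \<notin> I" for \<xi> i
    using that unfolding coeff_space_def by blast
  have "\<exists>Q. hermitian_projection_into I ?P Q \<and> (\<forall>\<xi>\<in>?P. mat_fixes I Q \<xi>)"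
    by (rule hermitian_projection_onto_exists[OF \<open>finite I\<close> subspace_coeff_space[OF V]])
      (rule support)
  then obtain Q where herm: "hermitian Q" and cols: "\<forall>j\<in>I. column I Q j \<in> ?P"
    and fixed: "\<forall>\<xi>\<in>?P. mat_fixes I Q \<xi>"
    unfolding hermitian_projection_into_def by blast
  have comm: "(\<Sum>k\<in>I. sc H (Q i k) (M k j)) = (\<Sum>k\<in>I. sc H (Q k j) (M i k))"
    if "i \<in> I" "j \<in> I" for i j
    using projection_commutes[OF herm _ coeff_projection_QMQ[OF coideal row cols fixed] that] unitary
    unfolding unitary_matrix_def by blast
  define \<psi> where "\<psi> j = (\<Sum>k\<in>I. sc H (Q k j) (\<phi> k))" for j
  have "\<psi> j \<in> V" if "j \<in> I" for j
  proof -
    have "(\<Sum>k\<in>I. sc H (column I Q j k) (\<phi> k)) \<in> V"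
      using cols that unfolding coeff_space_def by blast
    then show ?thesis
      unfolding \<psi>_def column_def by simp
  qed
  moreover have "corep_row H I M \<psi>"
    unfolding \<psi>_def by (rule corep_row_mix[OF row comm])
  moreover have "\<exists>j\<in>I. cou H (\<psi> j) \<noteq> 0"
  proof -
    have "(\<Sum>j\<in>I. sc H (p j) (\<psi> j)) = (\<Sum>k\<in>I. sc H (\<Sum>j\<in>I. Q k j * p j) (\<phi> k))"
      unfolding \<psi>_def vs.scale_sum_right vs.scale_scale vs.scale_sum_left
      by (subst sum.swap) (simp add: mult.commute)
    also have "\<dots> = (\<Sum>k\<in>I. sc H (p k) (\<phi> k))"
      using fixed p unfolding mat_fixes_def by (intro sum.cong refl) simp
    finally have "cou H (\<Sum>j\<in>I. sc H (p j) (\<psi> j)) \<noteq> 0"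
      using nonzero by simp
    then show ?thesis
      by (auto simp: lmap_sum[OF linear_cou] lmap_scale[OF linear_cou] intro: ccontr)
  qed
  ultimately show ?thesis
    using that by blast
qed

lemma corep_row_counit_expansion:
  assumes "corep_row H I M \<psi>" "j \<in> I"
  shows "\<psi> j = (\<Sum>i\<in>I. sc H (cou H (\<psi> i)) (M i j))"
proof (rule functional_ext)
  fix g assume g: "linear_functional (sc H) g"
  have "g (\<psi> j) = cop_apply H (cou H) g (\<psi> j)"
    by (simp add: cop_apply_counit[OF g])
  also have "\<dots> = (\<Sum>i\<in>I. cou H (\<psi> i) * g (M i j))"
    using assms linear_cou g unfolding corep_row_def by blast
  finally show "g (\<psi> j) = g (\<Sum>i\<in>I. sc H (cou H (\<psi> i)) (M i j))"
    by (simp add: lmap_sum[OF g] lmap_scale[OF g])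
qed

lemma corep_row_star_contraction:
  assumes "finite I" "corep_row H I M \<psi>" "unitary_matrix H I M" "i \<in> I"
  shows "(\<Sum>j\<in>I. M i j * st H (\<psi> j)) = sc H (cnj (cou H (\<psi> i))) 1"
proof -
  have "(\<Sum>j\<in>I. M i j * st H (\<psi> j))
      = (\<Sum>j\<in>I. M i j * (\<Sum>k\<in>I. sc H (cnj (cou H (\<psi> k))) (st H (M k j))))"
    using corep_row_counit_expansion[OF assms(2)] by (intro sum.cong refl) (metis star_comb)
  also have "\<dots> = (\<Sum>k\<in>I. sc H (cnj (cou H (\<psi> k))) (\<Sum>j\<in>I. M i j * st H (M k j)))"
    by (simp add: sum_distrib_left vs.scale_sum_right scale_mult_right) (rule sum.swap)
  also have "\<dots> = (\<Sum>k\<in>I. if k = i then sc H (cnj (cou H (\<psi> k))) 1 else 0)"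
    using assms(3,4) unfolding unitary_matrix_def by (intro sum.cong refl) auto
  also have "\<dots> = sc H (cnj (cou H (\<psi> i))) 1"
    using assms(1,4) by simp
  finally show ?thesis .
qed

lemma corep_row_coinvariant:
  assumes row: "corep_row H I M \<psi>" and lin: "Vector_Spaces.linear (sc H) (sc C) \<theta>"
    and weights: "\<And>i. i \<in> I \<Longrightarrow> \<theta> (\<Sum>j\<in>I. sc H (w j) (M i j)) = sc C (w i) 1"
  defines "\<zeta> \<equiv> \<Sum>j\<in>I. sc H (w j) (\<psi> j)"
  shows "tensor_eq (sc H) (sc C) (map (\<lambda>(a,b). (a, \<theta> b)) (cop H \<zeta>)) [(\<zeta>, 1)]"
  unfolding tensor_eq_def
proof (intro allI impI)
  fix f g assume f: "linear_functional (sc H) f" and g: "linear_functional (sc C) g"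
  have g\<theta>: "linear_functional (sc H) (\<lambda>x. g (\<theta> x))"
    by (rule linear_functional_compose[OF lin g])
  note E = linear_cop_apply[OF f g\<theta>]
  have "sum_list (map (\<lambda>(x,y). f x * g y) (map (\<lambda>(a,b). (a, \<theta> b)) (cop H \<zeta>)))
      = cop_apply H f (\<lambda>x. g (\<theta> x)) \<zeta>"
    unfolding cop_apply_def by (simp add: case_prod_unfold comp_def)
  also have "\<dots> = (\<Sum>j\<in>I. w j * (\<Sum>i\<in>I. f (\<psi> i) * g (\<theta> (M i j))))"
    using row f g\<theta> unfolding corep_row_def \<zeta>_def by (simp add: lmap_sum[OF E] lmap_scale[OF E])
  also have "\<dots> = (\<Sum>i\<in>I. f (\<psi> i) * g (\<theta> (\<Sum>j\<in>I. sc H (w j) (M i j))))"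
    by (simp add: lmap_sum[OF lin] lmap_scale[OF lin] lmap_sum[OF g] lmap_scale[OF g]
        sum_distrib_left mult.left_commute) (rule sum.swap)
  also have "\<dots> = (\<Sum>i\<in>I. w i * f (\<psi> i)) * g 1"
    by (simp add: weights lmap_scale[OF g] sum_distrib_left sum_distrib_right mult_ac)
  also have "\<dots> = f \<zeta> * g 1"
    unfolding \<zeta>_def by (simp add: lmap_sum[OF f] lmap_scale[OF f])
  finally show "sum_list (map (\<lambda>(x,y). f x * g y) (map (\<lambda>(a,b). (a, \<theta> b)) (cop H \<zeta>)))
      = sum_list (map (\<lambda>(x,y). f x * g y) [(\<zeta>, 1)])"
    by simp
qed

lemma hom_row_weights:
  assumes hom: "hopf_star_hom H C \<theta>" and trivial: "\<And>j. j \<in> I \<Longrightarrow> \<theta> (\<psi> j) = sc C (cou H (\<psi> j)) 1"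
    and "finite I" and row: "corep_row H I M \<psi>" and unitary: "unitary_matrix H I M" and "i \<in> I"
  shows "\<theta> (\<Sum>j\<in>I. sc H (cnj (cou H (\<psi> j))) (M i j)) = sc C (cnj (cou H (\<psi> i))) 1"
proof -
  have lin: "Vector_Spaces.linear (sc H) (sc C) \<theta>" and mult: "\<And>x y. \<theta> (x * y) = \<theta> x * \<theta> y"
    and one: "\<theta> 1 = 1" and star: "\<And>x. \<theta> (st H x) = st C (\<theta> x)"
    using hom unfolding hopf_star_hom_def by blast+
  have "\<theta> (st H (\<psi> j - sc H (cou H (\<psi> j)) 1)) = 0" if "j \<in> I" for j
  proof -
    have "\<theta> (\<psi> j - sc H (cou H (\<psi> j)) 1) = 0"
      using trivial[OF that] by (simp add: lmap_diff[OF lin] lmap_scale[OF lin] one)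
    then show ?thesis
      using star[of 0] by (simp add: star star_zero lmap_zero[OF lin])
  qed
  then have "\<theta> (\<Sum>j\<in>I. M i j * st H (\<psi> j - sc H (cou H (\<psi> j)) 1)) = 0"
    by (simp add: lmap_sum[OF lin] mult)
  moreover have "(\<Sum>j\<in>I. M i j * st H (\<psi> j - sc H (cou H (\<psi> j)) 1))
      = sc H (cnj (cou H (\<psi> i))) 1 - (\<Sum>j\<in>I. sc H (cnj (cou H (\<psi> j))) (M i j))"
    using corep_row_star_contraction[OF \<open>finite I\<close> row unitary \<open>i \<in> I\<close>]
    by (simp add: star_diff star_scale star_one right_diff_distrib sum_subtractf
        scale_mult_right[symmetric])
  ultimately show ?thesis
    by (simp add: lmap_diff[OF lin] lmap_scale[OF lin] one)
qed

lemma invariant_vector_of_corep_row: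
  assumes hom: "hopf_star_hom H C \<theta>"
    and trivial_on_Z: "\<forall>z\<in>Z. \<theta> z = sc C (cou H z) 1" and "V \<subseteq> Z" and V: "vs.subspace V"
    and "finite I" and in_V: "\<forall>j\<in>I. \<psi> j \<in> V" and row: "corep_row H I M \<psi>"
    and unitary: "unitary_matrix H I M" and nonzero: "\<exists>j\<in>I. cou H (\<psi> j) \<noteq> 0"
  shows "\<exists>\<zeta>\<in>V. \<zeta> \<noteq> 0 \<and> tensor_eq (sc H) (sc C) (map (\<lambda>(a,b). (a, \<theta> b)) (cop H \<zeta>)) [(\<zeta>, 1)]"
proof -
  define \<zeta> where "\<zeta> = (\<Sum>j\<in>I. sc H (cnj (cou H (\<psi> j))) (\<psi> j))"
  have "\<zeta> \<in> V"
    unfolding \<zeta>_def using in_V by (intro vs.subspace_sum[OF V] vs.subspace_scale[OF V]) auto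
  moreover have "\<zeta> \<noteq> 0"
  proof
    assume "\<zeta> = 0"
    obtain j where "j \<in> I" "cou H (\<psi> j) \<noteq> 0"
      using nonzero by blast
    then have "cinner I (\<lambda>j. cou H (\<psi> j)) (\<lambda>j. cou H (\<psi> j)) \<noteq> 0"
      by (rule cinner_self_nonzero[OF \<open>finite I\<close>])
    moreover have "cou H \<zeta> = cinner I (\<lambda>j. cou H (\<psi> j)) (\<lambda>j. cou H (\<psi> j))"
      unfolding \<zeta>_def cinner_def by (simp add: lmap_sum[OF linear_cou] lmap_scale[OF linear_cou])
    ultimately show False
      using \<open>\<zeta> = 0\<close> lmap_zero[OF linear_cou] by simp
  qed
  moreover have "tensor_eq (sc H) (sc C) (map (\<lambda>(a,b). (a, \<theta> b)) (cop H \<zeta>)) [(\<zeta>, 1)]"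
    unfolding \<zeta>_def using hom trivial_on_Z in_V \<open>V \<subseteq> Z\<close>
    by (intro corep_row_coinvariant[OF row] hom_row_weights[OF hom _ \<open>finite I\<close> row unitary])
      (auto simp: hopf_star_hom_def)
  ultimately show ?thesis
    by blast
qed

lemma exists_nonzero_if_dim_pos:
  assumes "vs.dim V \<ge> 1"
  obtains v where "v \<in> V" "v \<noteq> 0"
proof (rule ccontr)
  assume "\<not> thesis"
  then have "V \<subseteq> {0}"
    using that by blast
  then have "vs.dim V = card ({} :: 'a set)"
    using vs.span_mono[of V "{0}"]
    by (intro vs.dim_eq_card) (auto simp: vs.independent_empty vs.span_zero vs.span_insert_0)
  then show False
    using assms by simp
qed

end

theorem proposition1p2p1:
  fixes A :: "('a::ring_1) hopf_data" and C :: "('c::ring_1) hopf_data"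
    and \<theta> :: "'a \<Rightarrow> 'c" and Z V :: "'a set" and N :: nat
  assumes "CQG_algebra A"
    and "star_subalgebra A Z" and "right_coideal A Z"
    and "hopf_star_algebra C"
    and "hopf_star_hom A C \<theta>" and "surj \<theta>"
    and "\<forall>z\<in>Z. \<theta> z = sc C (cou A z) 1"
    and "V \<subseteq> Z" and "right_coideal A V"
    and "\<exists>B. finite B \<and> module.span (sc A) B = V"
    and "vector_space.dim (sc A) V = N" and "N \<ge> 1"
  shows "\<exists>\<zeta>\<^sub>0\<in>V. \<zeta>\<^sub>0 \<noteq> 0 \<and>
           tensor_eq (sc A) (sc C) (map (\<lambda>(a,b). (a, \<theta> b)) (cop A \<zeta>\<^sub>0)) [(\<zeta>\<^sub>0, 1)]"
proof -
  interpret hopf_star A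
    using assms(1) unfolding CQG_algebra_def by unfold_locales blast
  have V: "vs.subspace V"
    using assms(9) unfolding right_coideal_def by blast
  obtain v where "v \<in> V" "v \<noteq> 0"
    using exists_nonzero_if_dim_pos assms(11,12) by blast
  then obtain v' where "v' \<in> V" "cou A v' \<noteq> 0"
    using right_coideal_counit_nonzero[OF assms(9)] by blast
  obtain I :: "('a \<times> nat) set" and M \<phi> p where "finite I" and row: "corep_row A I M \<phi>"
    and unitary: "unitary_matrix A I M" and support: "\<forall>i. i \<notin> I \<longrightarrow> p i = 0"
    and v': "v' = (\<Sum>i\<in>I. sc A (p i) (\<phi> i))"
    by (rule CQG_row_expansion[OF assms(1)])
  have "p \<in> coeff_space A I \<phi> V"
    using support \<open>v' \<in> V\<close> unfolding coeff_space_def v' by simp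
  moreover have "cou A (\<Sum>i\<in>I. sc A (p i) (\<phi> i)) \<noteq> 0"
    using \<open>cou A v' \<noteq> 0\<close> unfolding v' .
  ultimately obtain \<psi> where "\<forall>j\<in>I. \<psi> j \<in> V" "corep_row A I M \<psi>" "\<exists>j\<in>I. cou A (\<psi> j) \<noteq> 0"
    by (rule coideal_contains_corep_row[OF \<open>finite I\<close> assms(9) row unitary])
  then show ?thesis
    by (rule invariant_vector_of_corep_row[OF assms(5,7,8) V \<open>finite I\<close> _ _ unitary])
qed

end
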